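(* Let $k\ge1$ and $S_a,S_b\in\{0,1\}^{k^2}$. Let $G$ be the undirected weighted graph on vertices $\ell_i,\ell_i',r_i,r_i'$ ($1\le i\le k$) with edges $\{\ell_i,r_i\}$ and $\{\ell_i',r_i'\}$ of weight $1$ for each $i$, the edge $\{\ell_i,\ell_j'\}$ of weight $2$ whenever $S_a[(i-1)k+j]=1$, and the edge $\{r_i,r_j'\}$ of weight $2$ whenever $S_b[(i-1)k+j]=1$. If there is an index $m$ with $S_a[m]=S_b[m]=1$, then $G$ contains a simple cycle of weight $6$; otherwise every simple cycle of $G$ has weight at least $8$.
   Context: For a bit string $S$, $S[m]$ denotes its $m$-th bit. *)

theory Defs
  imports Main
begin

text \<open>Bit strings S in {0,1}^(k^2) are lists of booleans of length k^2;
  the m-th bit S[m] (1-based, 1 <= m <= k^2) is S ! (m - 1).\<close>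

definition bit :: "bool list \<Rightarrow> nat \<Rightarrow> bool" where
  "bit S m = S ! (m - 1)"

datatype vtx = Lv nat | Lv' nat | Rv nat | Rv' nat

definition edgesG :: "nat \<Rightarrow> bool list \<Rightarrow> bool list \<Rightarrow> (vtx set \<times> nat) set" where
  "edgesG k Sa Sb =
     {({Lv i, Rv i}, 1) | i. 1 \<le> i \<and> i \<le> k}
   \<union> {({Lv' i, Rv' i}, 1) | i. 1 \<le> i \<and> i \<le> k}
   \<union> {({Lv i, Lv' j}, 2) | i j. 1 \<le> i \<and> i \<le> k \<and> 1 \<le> j \<and> j \<le> k \<and> bit Sa ((i - 1) * k + j)}
   \<union> {({Rv i, Rv' j}, 2) | i j. 1 \<le> i \<and> i \<le> k \<and> 1 \<le> j \<and> j \<le> k \<and> bit Sb ((i - 1) * k + j)}"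

definition simple_cycle :: "(vtx set \<times> nat) set \<Rightarrow> vtx list \<Rightarrow> nat list \<Rightarrow> bool" where
  "simple_cycle E vs ws \<longleftrightarrow>
     length vs \<ge> 3 \<and> distinct vs \<and> length ws = length vs \<and>
     (\<forall>i < length vs. ({vs ! i, vs ! (Suc i mod length vs)}, ws ! i) \<in> E)"

definition cycle_weight :: "nat list \<Rightarrow> nat" where
  "cycle_weight ws = sum_list ws"

end

theory Submission
  imports Defs
begin

text \<open>A common index m = (i-1)k + j gives the cycle l_i, l'_j, r'_j, r_i of weight 6. Conversely, G is
  bipartite (colour classes {l_i, r'_j} and {l'_j, r_i}) and its weight-1 edges form a perfect
  matching, so a simple cycle has even length and never uses two weight-1 edges in a row;
  consecutive edges therefore weigh at least 3 together and a cycle of length n weighs at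
  least 3n/2. This settles n \<ge> 6. A 4-cycle of weight 2 edges weighs 8, and a 4-cycle through a
  weight-1 edge {l_i, r_i} (or {l'_j, r'_j}) is forced to be l_i, r_i, r'_j, l'_j, which
  exhibits a common index.\<close>

lemma simple_cycle_edge:
  assumes "simple_cycle E vs ws"
  shows "({vs ! (i mod length vs), vs ! (Suc i mod length vs)}, ws ! (i mod length vs)) \<in> E"
proof -
  have "length vs > 0" using assms unfolding simple_cycle_def by auto
  then have "i mod length vs < length vs" by simp
  then show ?thesis
    using assms mod_Suc_eq[of i "length vs"] unfolding simple_cycle_def by metis
qed

lemma simple_cycle_even_length:
  fixes f :: "vtx \<Rightarrow> bool"
  assumes cycle: "simple_cycle E vs ws"
    and colouring: "\<And>a b w. ({a, b}, w) \<in> E \<Longrightarrow> f a \<noteq> f b"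
  shows "even (length vs)"
proof -
  define n where "n = length vs"
  have n: "n \<ge> 3" using cycle unfolding simple_cycle_def n_def by simp
  have changes: "f (vs ! i) \<noteq> f (vs ! (Suc i mod n))" if "i < n" for i
    using colouring simple_cycle_edge[OF cycle, of i] that unfolding n_def by simp
  have alternating: "f (vs ! i) = (f (vs ! 0) \<longleftrightarrow> even i)" if "i < n" for i
    using that
  proof (induction i)
    case (Suc i)
    with changes[of i] show ?case by auto
  qed simp
  have "f (vs ! (n - 1)) \<noteq> f (vs ! 0)"
    using changes[of "n - 1"] n by simp
  with alternating[of "n - 1"] n have "odd (n - 1)" by auto
  with n show ?thesis unfolding n_def by simp
qed

lemma mod_add_two_neq:
  fixes i n :: nat
  assumes "i < n" and "n \<ge> 3"
  shows "(i + 2) mod n \<noteq> i"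
  using assms by (cases "i + 2 < n") (auto simp: le_mod_geq)

lemma simple_cycle_matching_weight_not_consecutive:
  assumes cycle: "simple_cycle E vs ws"
    and matching: "\<And>a b c. ({a, b}, w) \<in> E \<Longrightarrow> ({b, c}, w) \<in> E \<Longrightarrow> c = a"
    and "ws ! (i mod length vs) = w"
  shows "ws ! (Suc i mod length vs) \<noteq> w"
proof
  define n where "n = length vs"
  have n: "n \<ge> 3" and "n > 0" and "distinct vs"
    using cycle unfolding simple_cycle_def n_def by auto
  assume "ws ! (Suc i mod length vs) = w"
  then have "vs ! ((i + 2) mod n) = vs ! (i mod n)"
    using matching simple_cycle_edge[OF cycle, of i] simple_cycle_edge[OF cycle, of "Suc i"]
      assms(3) unfolding n_def by (metis add_2_eq_Suc')
  then have "(i + 2) mod n = i mod n"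
    using \<open>distinct vs\<close> \<open>n > 0\<close> unfolding n_def by (metis nth_eq_iff_index_eq mod_less_divisor)
  then have "(i mod n + 2) mod n = i mod n" by (metis mod_add_left_eq)
  with mod_add_two_neq[of "i mod n" n] n \<open>n > 0\<close> show False by simp
qed

lemma sum_nth_Suc_mod:
  fixes xs :: "'a::comm_monoid_add list"
  shows "(\<Sum>i<length xs. xs ! (Suc i mod length xs)) = sum_list xs"
proof -
  have "sum_list (rotate1 xs) = sum_list xs"
    by (cases xs) (simp_all add: add.commute)
  then show ?thesis
    by (simp add: sum_list_sum_nth atLeast0LessThan nth_rotate1)
qed

lemma sum_list_adjacent_bound:
  fixes xs :: "nat list"
  assumes "\<And>i. i < length xs \<Longrightarrow> c \<le> xs ! i + xs ! (Suc i mod length xs)"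
  shows "c * length xs \<le> 2 * sum_list xs"
proof -
  have "c * length xs = (\<Sum>i<length xs. c)" by simp
  also have "\<dots> \<le> (\<Sum>i<length xs. xs ! i + xs ! (Suc i mod length xs))"
    by (rule sum_mono) (use assms in simp)
  also have "\<dots> = 2 * sum_list xs"
    by (simp add: sum.distrib sum_nth_Suc_mod sum_list_sum_nth atLeast0LessThan)
  finally show ?thesis .
qed

fun colour :: "vtx \<Rightarrow> bool" where
  "colour (Lv i) = False" | "colour (Rv' i) = False" | "colour (Lv' i) = True" | "colour (Rv i) = True"

lemma edgesG_weight: "(e, w) \<in> edgesG k Sa Sb \<Longrightarrow> w = 1 \<or> w = 2"
  unfolding edgesG_def by auto

lemma edgesG_colour: "({a, b}, w) \<in> edgesG k Sa Sb \<Longrightarrow> colour a \<noteq> colour b"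
  unfolding edgesG_def by (auto simp: doubleton_eq_iff)

lemma edgesG_weight_one_matching:
  "({a, b}, 1) \<in> edgesG k Sa Sb \<Longrightarrow> ({b, c}, 1) \<in> edgesG k Sa Sb \<Longrightarrow> c = a"
  unfolding edgesG_def by (auto simp: doubleton_eq_iff)

lemma common_bit_of_pair:
  fixes i j k :: nat
  assumes "1 \<le> i" "i \<le> k" "1 \<le> j" "j \<le> k"
    and "bit Sa ((i - 1) * k + j)" "bit Sb ((i - 1) * k + j)"
  shows "\<exists>m. 1 \<le> m \<and> m \<le> k^2 \<and> bit Sa m \<and> bit Sb m"
proof (intro exI conjI)
  have "(i - 1) * k \<le> (k - 1) * k" using assms by (simp add: mult_le_mono1)
  moreover have "k^2 = (k - 1) * k + k" using assms by (cases k) (auto simp: power2_eq_square)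
  ultimately show "(i - 1) * k + j \<le> k^2" using assms by linarith
qed (use assms in simp_all)

lemma pair_index_exists:
  fixes k m :: nat
  assumes "1 \<le> m" "m \<le> k^2"
  obtains i j where "1 \<le> i" "i \<le> k" "1 \<le> j" "j \<le> k" "m = (i - 1) * k + j"
proof
  have k: "k > 0" using assms by (cases k) auto
  show "m = ((m - 1) div k + 1 - 1) * k + ((m - 1) mod k + 1)"
    using assms(1) div_mult_mod_eq[of "m - 1" k] by simp
  have "m - 1 < k * k" using assms by (simp add: power2_eq_square)
  then show "(m - 1) div k + 1 \<le> k"
    using k by (simp add: div_less_iff_less_mult Suc_le_eq)
  show "(m - 1) mod k + 1 \<le> k" using k by (simp add: Suc_le_eq)
qed simp_all

text \<open>If {a, b} = {l_i, r_i}, then c, d are r'_j, l'_j' with S_b[(i-1)k+j] = S_a[(i-1)k+j'] = 1,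
  and {c, d} is an edge only if j = j'; the case {a, b} = {l'_j, r'_j} is symmetric.\<close>

lemma edgesG_four_edges_common_bit:
  assumes "({a, b}, 1) \<in> edgesG k Sa Sb" "({b, c}, 2) \<in> edgesG k Sa Sb"
    and "({c, d}, w) \<in> edgesG k Sa Sb" "({d, a}, 2) \<in> edgesG k Sa Sb"
  shows "\<exists>m. 1 \<le> m \<and> m \<le> k^2 \<and> bit Sa m \<and> bit Sb m"
  using assms unfolding edgesG_def
  by (cases a) (auto simp: doubleton_eq_iff intro: common_bit_of_pair[simplified])

lemma edgesG_square_cycle:
  assumes "1 \<le> i" "i \<le> k" "1 \<le> j" "j \<le> k"
    and "bit Sa ((i - 1) * k + j)" "bit Sb ((i - 1) * k + j)"
  shows "simple_cycle (edgesG k Sa Sb) [Lv i, Lv' j, Rv' j, Rv i] [2, 1, 2, 1]"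
  unfolding simple_cycle_def
proof (intro conjI allI impI)
  let ?vs = "[Lv i, Lv' j, Rv' j, Rv i]"
  have edges: "({Lv i, Lv' j}, 2) \<in> edgesG k Sa Sb" "({Lv' j, Rv' j}, 1) \<in> edgesG k Sa Sb"
    "({Rv' j, Rv i}, 2) \<in> edgesG k Sa Sb" "({Rv i, Lv i}, 1) \<in> edgesG k Sa Sb"
    using assms unfolding edgesG_def by (auto simp: insert_commute)
  fix t assume "t < length ?vs"
  then have "t = 0 \<or> t = 1 \<or> t = 2 \<or> t = 3" by auto
  with edges show "({?vs ! t, ?vs ! (Suc t mod length ?vs)}, [2, 1, 2, 1] ! t) \<in> edgesG k Sa Sb"
    by auto
qed simp_all

lemma edgesG_weight_six_cycle_of_common_bit:
  assumes "\<exists>m. 1 \<le> m \<and> m \<le> k^2 \<and> bit Sa m \<and> bit Sb m"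
  shows "\<exists>vs ws. simple_cycle (edgesG k Sa Sb) vs ws \<and> cycle_weight ws = 6"
proof -
  obtain i j where "1 \<le> i" "i \<le> k" "1 \<le> j" "j \<le> k"
      "bit Sa ((i - 1) * k + j)" "bit Sb ((i - 1) * k + j)"
    using assms by (metis pair_index_exists)
  then have "simple_cycle (edgesG k Sa Sb) [Lv i, Lv' j, Rv' j, Rv i] [2, 1, 2, 1]"
    by (rule edgesG_square_cycle)
  moreover have "cycle_weight [2, 1, 2, 1] = 6" by (simp add: cycle_weight_def)
  ultimately show ?thesis by blast
qed

lemma edgesG_cycle_weight_cases:
  assumes "simple_cycle (edgesG k Sa Sb) vs ws" and "i < length vs"
  shows "ws ! i = 1 \<or> ws ! i = 2"
  using simple_cycle_edge[OF assms(1), of i] assms(2) edgesG_weight by simp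

lemma edgesG_cycle_weight_lower_bound:
  assumes cycle: "simple_cycle (edgesG k Sa Sb) vs ws"
  shows "3 * length vs \<le> 2 * cycle_weight ws"
proof -
  have n: "length vs \<ge> 3" "length ws = length vs"
    using cycle unfolding simple_cycle_def by simp_all
  have "3 \<le> ws ! i + ws ! (Suc i mod length ws)" if "i < length ws" for i
  proof -
    have "ws ! i = 1 \<Longrightarrow> ws ! (Suc i mod length vs) \<noteq> 1"
      using simple_cycle_matching_weight_not_consecutive[OF cycle edgesG_weight_one_matching, where i = i]
        that n by simp
    moreover have "Suc i mod length vs < length vs"
      using n by (intro mod_less_divisor) linarith
    ultimately show ?thesis
      using edgesG_cycle_weight_cases[OF cycle, of i]
        edgesG_cycle_weight_cases[OF cycle, of "Suc i mod length vs"] that n by fastforce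
  qed
  then show ?thesis
    using sum_list_adjacent_bound n unfolding cycle_weight_def by metis
qed

lemma edgesG_square_common_bit:
  assumes cycle: "simple_cycle (edgesG k Sa Sb) vs ws"
    and four: "length vs = 4" and "i < 4" and "ws ! i = 1"
  shows "\<exists>m. 1 \<le> m \<and> m \<le> k^2 \<and> bit Sa m \<and> bit Sb m"
proof -
  define v where "v t = vs ! ((i + t) mod 4)" for t
  define w where "w t = ws ! ((i + t) mod 4)" for t
  have edge: "({v t, v (Suc t)}, w t) \<in> edgesG k Sa Sb" for t
    using simple_cycle_edge[OF cycle, of "i + t"] four unfolding v_def w_def by simp
  have alternating: "w t = 1 \<Longrightarrow> w (Suc t) \<noteq> 1" for t
    using simple_cycle_matching_weight_not_consecutive[OF cycle edgesG_weight_one_matching, where i = "i + t"] four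
    unfolding w_def by simp
  have "w 0 = 1" using assms unfolding w_def by simp
  moreover have "w (Suc 3) = w 0" "v (Suc 3) = v 0" unfolding v_def w_def by simp_all
  ultimately have "w 1 \<noteq> 1" "w 3 \<noteq> 1"
    using alternating[of 0] alternating[of 3] by auto
  then have "w 1 = 2" "w 3 = 2"
    using edge[of 1] edge[of 3] edgesG_weight by blast+
  with edge[of 0] edge[of 1] edge[of 2] edge[of 3] \<open>w 0 = 1\<close> \<open>v (Suc 3) = v 0\<close> show ?thesis
    using edgesG_four_edges_common_bit[of "v 0" "v 1" k Sa Sb "v 2" "v 3" "w 2"]
    by (simp add: numeral_eq_Suc)
qed

lemma edgesG_four_cycle_weight:
  assumes cycle: "simple_cycle (edgesG k Sa Sb) vs ws" and four: "length vs = 4"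
    and disjoint: "\<not> (\<exists>m. 1 \<le> m \<and> m \<le> k^2 \<and> bit Sa m \<and> bit Sb m)"
  shows "cycle_weight ws = 8"
proof -
  have "length ws = 4" using cycle four unfolding simple_cycle_def by simp
  have "ws = replicate 4 2"
  proof (rule replicate_eqI)
    fix w assume "w \<in> set ws"
    then obtain i where "i < 4" "w = ws ! i" using \<open>length ws = 4\<close> by (auto simp: in_set_conv_nth)
    then show "w = 2"
      using edgesG_cycle_weight_cases[OF cycle, of i] edgesG_square_common_bit[OF cycle four]
        disjoint four by auto
  qed fact
  then show ?thesis by (simp add: cycle_weight_def sum_list_replicate)
qed

theorem mainTheorem15:
  fixes k :: nat and Sa Sb :: "bool list"
  assumes "k \<ge> 1" and "length Sa = k^2" and "length Sb = k^2"
  shows "((\<exists>m. 1 \<le> m \<and> m \<le> k^2 \<and> bit Sa m \<and> bit Sb m) \<longrightarrow>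
            (\<exists>vs ws. simple_cycle (edgesG k Sa Sb) vs ws \<and> cycle_weight ws = 6))
       \<and> ((\<not> (\<exists>m. 1 \<le> m \<and> m \<le> k^2 \<and> bit Sa m \<and> bit Sb m)) \<longrightarrow>
            (\<forall>vs ws. simple_cycle (edgesG k Sa Sb) vs ws \<longrightarrow> cycle_weight ws \<ge> 8))"
proof (intro conjI impI allI)
  show "\<exists>vs ws. simple_cycle (edgesG k Sa Sb) vs ws \<and> cycle_weight ws = 6"
    if "\<exists>m. 1 \<le> m \<and> m \<le> k^2 \<and> bit Sa m \<and> bit Sb m"
    using that by (rule edgesG_weight_six_cycle_of_common_bit)
next
  fix vs ws
  assume disjoint: "\<not> (\<exists>m. 1 \<le> m \<and> m \<le> k^2 \<and> bit Sa m \<and> bit Sb m)"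
    and cycle: "simple_cycle (edgesG k Sa Sb) vs ws"
  have "length vs \<ge> 3" using cycle unfolding simple_cycle_def by simp
  moreover have "even (length vs)"
    using simple_cycle_even_length[OF cycle edgesG_colour] .
  ultimately have "length vs = 4 \<or> length vs \<ge> 6" by presburger
  then show "cycle_weight ws \<ge> 8"
    using edgesG_four_cycle_weight[OF cycle _ disjoint] edgesG_cycle_weight_lower_bound[OF cycle]
    by auto
qed

end
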